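(* For any $C\ge2$ and any $\eta\ge2$, there exists a forward-KL-regularized linear bandit instance (of dimension $2$) such that $C^{\pi^*}\ge C/2$ and $D^2_{\pi^*}=\Theta(1)$.
   Context: A forward-KL-regularized linear bandit instance (single context) consists of a finite action set $\mathcal A$, a feature map $\phi:\mathcal A\to\mathbb R^d$, a parameter set $\Theta\subset\mathbb R^d$ defining $\mathcal F=\{a\mapsto\langle\theta,\phi(a)\rangle:\theta\in\Theta\}$, a true parameter $\theta^*\in\Theta$ with $r(a)=\langle\theta^*,\phi(a)\rangle\in[0,1]$, a full-support reference policy $\pi^{\mathrm{ref}}\in\Delta(\mathcal A)$, and $\eta>0$. $\pi^*=\arg\max_{\pi\in\Delta(\mathcal A)}\sum_a r(a)\pi(a)-\eta^{-1}\mathrm{KL}(\pi^{\mathrm{ref}}\|\pi)$; $C^{\pi^*}=\max_a\pi^*(a)/\pi^{\mathrm{ref}}(a)$; $D^2(a)=\sup_{g,h\in\mathcal F}\frac{(g(a)-h(a))^2}{\mathbb E_{a'\sim\pi^{\mathrm{ref}}}[(g(a')-h(a'))^2]}$; $D^2_{\pi^*}=\mathbb E_{a\sim\pi^*}D^2(a)$. $\Theta(1)$ means bounded above and below by absolute positive constants. *)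

theory Defs
  imports "HOL-Analysis.Analysis"
begin

definition pol_simplex :: "nat set \<Rightarrow> (nat \<Rightarrow> real) set" where
  "pol_simplex A = {\<pi>. (\<forall>a\<in>A. 0 \<le> \<pi> a) \<and> (\<forall>a. a \<notin> A \<longrightarrow> \<pi> a = 0) \<and> sum \<pi> A = 1}"

definition fkl :: "nat set \<Rightarrow> (nat \<Rightarrow> real) \<Rightarrow> (nat \<Rightarrow> real) \<Rightarrow> ereal" where
  "fkl A p q = (if \<exists>a\<in>A. 0 < p a \<and> q a = 0 then \<infinity>
      else ereal (\<Sum>a\<in>A. if p a = 0 then 0 else p a * ln (p a / q a)))"

definition reg_obj :: "nat set \<Rightarrow> (nat \<Rightarrow> real) \<Rightarrow> (nat \<Rightarrow> real) \<Rightarrow> real \<Rightarrow> (nat \<Rightarrow> real) \<Rightarrow> ereal" where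
  "reg_obj A r piref \<eta> \<pi> = ereal (\<Sum>a\<in>A. r a * \<pi> a) - ereal (1 / \<eta>) * fkl A piref \<pi>"

definition opt_policy :: "nat set \<Rightarrow> (nat \<Rightarrow> real) \<Rightarrow> (nat \<Rightarrow> real) \<Rightarrow> real \<Rightarrow> (nat \<Rightarrow> real)" where
  "opt_policy A r piref \<eta> = (THE \<pi>. \<pi> \<in> pol_simplex A \<and>
      (\<forall>\<pi>'\<in>pol_simplex A. reg_obj A r piref \<eta> \<pi>' \<le> reg_obj A r piref \<eta> \<pi>))"

definition coverage :: "nat set \<Rightarrow> (nat \<Rightarrow> real) \<Rightarrow> (nat \<Rightarrow> real) \<Rightarrow> real" where
  "coverage A piref \<pi> = Max ((\<lambda>a. \<pi> a / piref a) ` A)"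

text \<open>D^2(a) for the linear class F = {a. <theta, phi a> : theta in Theta}.\<close>

definition Dsq :: "nat set \<Rightarrow> (nat \<Rightarrow> real^2) \<Rightarrow> (real^2) set \<Rightarrow> (nat \<Rightarrow> real) \<Rightarrow> nat \<Rightarrow> ereal" where
  "Dsq A \<phi> \<Theta> piref a = (SUP p\<in>\<Theta> \<times> \<Theta>.
      ereal ((fst p \<bullet> \<phi> a - snd p \<bullet> \<phi> a)\<^sup>2 /
             (\<Sum>a'\<in>A. piref a' * (fst p \<bullet> \<phi> a' - snd p \<bullet> \<phi> a')\<^sup>2)))"

definition Dsq_pol :: "nat set \<Rightarrow> (nat \<Rightarrow> real^2) \<Rightarrow> (real^2) set \<Rightarrow> (nat \<Rightarrow> real) \<Rightarrow> (nat \<Rightarrow> real) \<Rightarrow> ereal" where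
  "Dsq_pol A \<phi> \<Theta> piref \<pi> = (\<Sum>a\<in>A. ereal (\<pi> a) * Dsq A \<phi> \<Theta> piref a)"

definition fkl_lin_bandit :: "nat set \<Rightarrow> (nat \<Rightarrow> real^2) \<Rightarrow> (real^2) set \<Rightarrow> real^2 \<Rightarrow> (nat \<Rightarrow> real) \<Rightarrow> real \<Rightarrow> bool" where
  "fkl_lin_bandit A \<phi> \<Theta> \<theta> piref \<eta> \<longleftrightarrow>
     finite A \<and> A \<noteq> {} \<and> \<theta> \<in> \<Theta> \<and>
     (\<forall>a\<in>A. 0 \<le> \<theta> \<bullet> \<phi> a \<and> \<theta> \<bullet> \<phi> a \<le> 1) \<and>
     (\<forall>a\<in>A. 0 < piref a) \<and> sum piref A = 1 \<and> 0 < \<eta>"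

end

theory Submission
  imports Defs
begin

text \<open>Two actions with rewards 1 and 0, features \<open>\<phi> 0 = (1, 1)\<close>, \<open>\<phi> 1 = (0, 1)\<close> and
  parameters \<open>(1, 0)\<close>, \<open>(1, 1)\<close>. The two parameters differ by \<open>(0, 1)\<close>, which pairs to 1
  with every feature, so every difference of two functions in \<open>F\<close> is constant on the actions:
  then \<open>D\<^sup>2(a) = 1\<close> for every action and \<open>D\<^sup>2\<^sub>\<pi> = 1\<close> for every policy.
  The forward-KL objective is strictly concave in \<open>\<pi>\<close> (through \<open>\<Sum>a. piref(a) ln \<pi>(a)\<close>), so the
  optimal policy is the unique full-support policy satisfying the first-order condition
  \<open>r(a) + piref(a) / (\<eta> \<pi>(a)) = L\<close>; the reference policy is chosen so that this condition
  holds with \<open>\<pi>(0) = C piref(0)\<close>, which gives coverage \<open>C\<close>.\<close>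

lemma fkl_eq_sum_ln:
  assumes "\<forall>a\<in>A. 0 < p a" and "\<forall>a\<in>A. 0 < q a"
  shows "fkl A p q = ereal (\<Sum>a\<in>A. p a * (ln (p a) - ln (q a)))"
  using assms unfolding fkl_def by (auto intro!: sum.cong simp: ln_div)

lemma fkl_eq_infinity:
  assumes "a \<in> A" and "0 < p a" and "q a = 0"
  shows "fkl A p q = \<infinity>"
  using assms unfolding fkl_def by auto

lemma reg_obj_eq_full_support:
  assumes "\<forall>a\<in>A. 0 < piref a" and "\<forall>a\<in>A. 0 < \<pi> a"
  shows "reg_obj A r piref \<eta> \<pi> =
    ereal ((\<Sum>a\<in>A. r a * \<pi> a) - (\<Sum>a\<in>A. piref a * (ln (piref a) - ln (\<pi> a))) / \<eta>)"
  unfolding reg_obj_def fkl_eq_sum_ln[OF assms] by simp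

lemma reg_obj_eq_minus_infinity:
  assumes "a \<in> A" and "0 < piref a" and "\<pi> a = 0" and "0 < \<eta>"
  shows "reg_obj A r piref \<eta> \<pi> = - \<infinity>"
  unfolding reg_obj_def fkl_eq_infinity[of a A piref \<pi>, OF assms(1-3)] using assms(4) by simp

lemma stationary_policy_gap:
  fixes r piref ps \<pi> :: "'a \<Rightarrow> real"
  assumes "finite A" and "0 < \<eta>"
    and pos: "\<forall>a\<in>A. 0 < piref a" "\<forall>a\<in>A. 0 < ps a" "\<forall>a\<in>A. 0 < \<pi> a"
    and mass: "sum \<pi> A = sum ps A"
    and stat: "\<forall>a\<in>A. r a + piref a / (\<eta> * ps a) = L"
    and "b \<in> A" and "\<pi> b \<noteq> ps b"
  shows "(\<Sum>a\<in>A. r a * \<pi> a) - (\<Sum>a\<in>A. piref a * (ln (piref a) - ln (\<pi> a))) / \<eta>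
       < (\<Sum>a\<in>A. r a * ps a) - (\<Sum>a\<in>A. piref a * (ln (piref a) - ln (ps a))) / \<eta>"
proof -
  \<comment> \<open>\<open>L\<close> is the Lagrange multiplier of \<open>\<Sum>a. \<pi> a = 1\<close>; the gap comes from
    \<open>ln x - ln y \<le> (x - y) / y\<close>, which is strict for \<open>x \<noteq> y\<close>.\<close>
  let ?gain = "\<lambda>a. r a * (\<pi> a - ps a) + piref a / \<eta> * (ln (\<pi> a) - ln (ps a))"
  let ?slack = "\<lambda>a. ln (\<pi> a) - ln (ps a) - (\<pi> a - ps a) / ps a"
  have gain_eq: "?gain a = L * (\<pi> a - ps a) + piref a / \<eta> * ?slack a" if "a \<in> A" for a
  proof -
    have "ps a \<noteq> 0" using pos(2) that by force
    have L: "L = r a + piref a / (\<eta> * ps a)" using stat that by simp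
    show ?thesis using \<open>ps a \<noteq> 0\<close> \<open>0 < \<eta>\<close> unfolding L by (simp add: field_simps)
  qed
  have slack_le: "?slack a \<le> 0" and weight_pos: "0 < piref a / \<eta>" if "a \<in> A" for a
    using ln_diff_le[of "\<pi> a" "ps a"] pos that \<open>0 < \<eta>\<close> by auto
  have "?slack b < 0"
    using ln_diff_less[of "\<pi> b" "ps b"] pos \<open>b \<in> A\<close> \<open>\<pi> b \<noteq> ps b\<close> by auto
  have "(\<Sum>a\<in>A. ?gain a) < (\<Sum>a\<in>A. L * (\<pi> a - ps a))"
  proof (rule sum_strict_mono_ex1[OF \<open>finite A\<close>])
    show "\<forall>a\<in>A. ?gain a \<le> L * (\<pi> a - ps a)"
    proof
      fix a assume "a \<in> A"
      then have "piref a / \<eta> * ?slack a \<le> 0"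
        using slack_le[OF \<open>a \<in> A\<close>] weight_pos[OF \<open>a \<in> A\<close>]
        by (intro mult_nonneg_nonpos) auto
      then show "?gain a \<le> L * (\<pi> a - ps a)" using gain_eq[OF \<open>a \<in> A\<close>] by linarith
    qed
    have "piref b / \<eta> * ?slack b < 0"
      using weight_pos[OF \<open>b \<in> A\<close>] \<open>?slack b < 0\<close> by (rule mult_pos_neg)
    then show "\<exists>a\<in>A. ?gain a < L * (\<pi> a - ps a)"
      using gain_eq[OF \<open>b \<in> A\<close>] \<open>b \<in> A\<close> by force
  qed
  also have "\<dots> = 0"
    using mass by (simp add: sum_distrib_left[symmetric] sum_subtractf)
  finally have "(\<Sum>a\<in>A. ?gain a) < 0" .
  moreover have "(\<Sum>a\<in>A. ?gain a) = (\<Sum>a\<in>A. r a * \<pi> a - r a * ps a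
      + (piref a * (ln (piref a) - ln (ps a)) - piref a * (ln (piref a) - ln (\<pi> a))) / \<eta>)"
    by (rule sum.cong) (simp_all add: algebra_simps diff_divide_distrib)
  ultimately show ?thesis
    by (simp add: sum.distrib sum_subtractf diff_divide_distrib flip: sum_divide_distrib)
qed

lemma pol_simplex_eqI:
  assumes "\<pi> \<in> pol_simplex A" and "\<pi>' \<in> pol_simplex A" and "\<forall>a\<in>A. \<pi> a = \<pi>' a"
  shows "\<pi> = \<pi>'"
  using assms unfolding pol_simplex_def by fastforce

lemma reg_obj_less_stationary:
  assumes "finite A" and "0 < \<eta>" and piref: "\<forall>a\<in>A. 0 < piref a"
    and ps: "ps \<in> pol_simplex A" "\<forall>a\<in>A. 0 < ps a"
    and stat: "\<forall>a\<in>A. r a + piref a / (\<eta> * ps a) = L"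
    and \<pi>: "\<pi> \<in> pol_simplex A" and "\<pi> \<noteq> ps"
  shows "reg_obj A r piref \<eta> \<pi> < reg_obj A r piref \<eta> ps"
proof (cases "\<forall>a\<in>A. 0 < \<pi> a")
  case True
  obtain b where "b \<in> A" "\<pi> b \<noteq> ps b"
    using pol_simplex_eqI[OF \<pi> ps(1)] \<open>\<pi> \<noteq> ps\<close> by blast
  moreover have "sum \<pi> A = sum ps A"
    using \<pi> ps(1) by (simp add: pol_simplex_def)
  ultimately show ?thesis
    using stationary_policy_gap[OF \<open>finite A\<close> \<open>0 < \<eta>\<close> piref ps(2) True _ stat]
    unfolding reg_obj_eq_full_support[OF piref ps(2)] reg_obj_eq_full_support[OF piref True]
    by simp
next
  case False
  then obtain a where "a \<in> A" "\<pi> a = 0"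
    using \<pi> by (force simp: pol_simplex_def)
  then have "reg_obj A r piref \<eta> \<pi> = - \<infinity>"
    using piref \<open>0 < \<eta>\<close> by (intro reg_obj_eq_minus_infinity) auto
  then show ?thesis
    unfolding reg_obj_eq_full_support[OF piref ps(2)] by simp
qed

lemma opt_policy_eq_stationary:
  assumes "finite A" and "0 < \<eta>" and "\<forall>a\<in>A. 0 < piref a"
    and "ps \<in> pol_simplex A" and "\<forall>a\<in>A. 0 < ps a"
    and "\<forall>a\<in>A. r a + piref a / (\<eta> * ps a) = L"
  shows "opt_policy A r piref \<eta> = ps"
  unfolding opt_policy_def
proof (rule the_equality)
  show "ps \<in> pol_simplex A \<and> (\<forall>\<pi>\<in>pol_simplex A. reg_obj A r piref \<eta> \<pi> \<le> reg_obj A r piref \<eta> ps)"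
    using reg_obj_less_stationary[OF assms] \<open>ps \<in> pol_simplex A\<close>
    by (metis less_imp_le order_refl)
  fix \<pi> assume "\<pi> \<in> pol_simplex A \<and> (\<forall>\<pi>'\<in>pol_simplex A. reg_obj A r piref \<eta> \<pi>' \<le> reg_obj A r piref \<eta> \<pi>)"
  then show "\<pi> = ps"
    using reg_obj_less_stationary[OF assms] \<open>ps \<in> pol_simplex A\<close>
    by (metis leD)
qed

lemma coverage_ge:
  assumes "finite A" and "a \<in> A"
  shows "\<pi> a / piref a \<le> coverage A piref \<pi>"
  using assms unfolding coverage_def by simp

lemma Dsq_eq_one_if_constant_differences:
  assumes piref: "sum piref A = 1"
    and const: "\<And>g h. g \<in> \<Theta> \<Longrightarrow> h \<in> \<Theta> \<Longrightarrow> \<exists>c. \<forall>a\<in>A. g \<bullet> \<phi> a - h \<bullet> \<phi> a = c"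
    and separating: "g\<^sub>0 \<in> \<Theta>" "h\<^sub>0 \<in> \<Theta>" "a\<^sub>0 \<in> A" "g\<^sub>0 \<bullet> \<phi> a\<^sub>0 \<noteq> h\<^sub>0 \<bullet> \<phi> a\<^sub>0"
    and "a \<in> A"
  shows "Dsq A \<phi> \<Theta> piref a = 1"
proof -
  have ratio: "(g \<bullet> \<phi> a - h \<bullet> \<phi> a)\<^sup>2 / (\<Sum>a'\<in>A. piref a' * (g \<bullet> \<phi> a' - h \<bullet> \<phi> a')\<^sup>2)
      = (if g \<bullet> \<phi> a\<^sub>0 = h \<bullet> \<phi> a\<^sub>0 then 0 else 1)" if gh: "g \<in> \<Theta>" "h \<in> \<Theta>" for g h
  proof -
    obtain c where c: "\<forall>a\<in>A. g \<bullet> \<phi> a - h \<bullet> \<phi> a = c"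
      using const[OF gh] by blast
    have "(\<Sum>a'\<in>A. piref a' * (g \<bullet> \<phi> a' - h \<bullet> \<phi> a')\<^sup>2) = (\<Sum>a'\<in>A. piref a' * c\<^sup>2)"
      using c by (intro sum.cong) auto
    also have "\<dots> = c\<^sup>2"
      using piref by (simp flip: sum_distrib_right)
    finally show ?thesis
      using c \<open>a \<in> A\<close> \<open>a\<^sub>0 \<in> A\<close> by auto
  qed
  show ?thesis
    unfolding Dsq_def
  proof (rule antisym)
    show "(SUP p\<in>\<Theta> \<times> \<Theta>. ereal ((fst p \<bullet> \<phi> a - snd p \<bullet> \<phi> a)\<^sup>2 /
        (\<Sum>a'\<in>A. piref a' * (fst p \<bullet> \<phi> a' - snd p \<bullet> \<phi> a')\<^sup>2))) \<le> 1"
      by (rule SUP_least) (clarsimp simp: ratio)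
    show "1 \<le> (SUP p\<in>\<Theta> \<times> \<Theta>. ereal ((fst p \<bullet> \<phi> a - snd p \<bullet> \<phi> a)\<^sup>2 /
        (\<Sum>a'\<in>A. piref a' * (fst p \<bullet> \<phi> a' - snd p \<bullet> \<phi> a')\<^sup>2)))"
      by (rule SUP_upper2[of "(g\<^sub>0, h\<^sub>0)"]) (simp_all add: ratio separating)
  qed
qed

lemma Dsq_pol_eq_one_if_constant_differences:
  assumes "sum piref A = 1"
    and "\<And>g h. g \<in> \<Theta> \<Longrightarrow> h \<in> \<Theta> \<Longrightarrow> \<exists>c. \<forall>a\<in>A. g \<bullet> \<phi> a - h \<bullet> \<phi> a = c"
    and "g\<^sub>0 \<in> \<Theta>" "h\<^sub>0 \<in> \<Theta>" "a\<^sub>0 \<in> A" "g\<^sub>0 \<bullet> \<phi> a\<^sub>0 \<noteq> h\<^sub>0 \<bullet> \<phi> a\<^sub>0"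
    and "\<pi> \<in> pol_simplex A"
  shows "Dsq_pol A \<phi> \<Theta> piref \<pi> = 1"
proof -
  have "Dsq_pol A \<phi> \<Theta> piref \<pi> = (\<Sum>a\<in>A. ereal (\<pi> a))"
    unfolding Dsq_pol_def using Dsq_eq_one_if_constant_differences[OF assms(1-6)] by simp
  also have "\<dots> = 1"
    using \<open>\<pi> \<in> pol_simplex A\<close> by (simp add: pol_simplex_def)
  finally show ?thesis .
qed

lemma inner_vector_2: "(vector [x, y] :: real^2) \<bullet> vector [u, v] = x * u + y * (v::real)"
  by (simp add: inner_vec_def sum_2)

definition two_arm_features :: "nat \<Rightarrow> real^2" where
  "two_arm_features a = (if a = 0 then vector [1, 1] else vector [0, 1])"

definition two_arm_params :: "(real^2) set" where
  "two_arm_params = {vector [1, 0], vector [1, 1]}"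

text \<open>Solving the first-order condition with \<open>\<pi>(0) = C piref(0)\<close> for rewards 1 and 0 gives
  the multiplier \<open>L = 1 + 1 / (\<eta> C)\<close> and \<open>\<pi>(0) = 1 - (1 - 1/C) / \<eta>\<close>.\<close>

definition two_arm_opt_mass :: "real \<Rightarrow> real \<Rightarrow> real" where
  "two_arm_opt_mass C \<eta> = 1 - (1 - 1 / C) / \<eta>"

definition two_arm_ref :: "real \<Rightarrow> real \<Rightarrow> nat \<Rightarrow> real" where
  "two_arm_ref C \<eta> a =
    (if a = 0 then two_arm_opt_mass C \<eta> / C else 1 - two_arm_opt_mass C \<eta> / C)"

definition two_arm_opt :: "real \<Rightarrow> real \<Rightarrow> nat \<Rightarrow> real" where
  "two_arm_opt C \<eta> a =
    (if a = 0 then two_arm_opt_mass C \<eta> else if a = 1 then 1 - two_arm_opt_mass C \<eta> else 0)"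

lemma two_arm_reward: "vector [1, 0] \<bullet> two_arm_features a = (if a = 0 then 1 else 0)"
  by (simp add: two_arm_features_def inner_vector_2)

lemma two_arm_opt_mass_bounds:
  assumes "1 < C" and "1 \<le> \<eta>"
  shows "0 < two_arm_opt_mass C \<eta>" and "two_arm_opt_mass C \<eta> < 1"
proof -
  have "0 < 1 / C" and "1 / C < 1"
    using assms by simp_all
  then have "0 < 1 - 1 / C" and "1 - 1 / C < \<eta>"
    using assms(2) by linarith+
  then have "0 < (1 - 1 / C) / \<eta>" and "(1 - 1 / C) / \<eta> < 1"
    using assms(2) by simp_all
  then show "0 < two_arm_opt_mass C \<eta>" and "two_arm_opt_mass C \<eta> < 1"
    unfolding two_arm_opt_mass_def by simp_all
qed

lemma fkl_lin_bandit_two_arm: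
  assumes "1 < C" and "1 \<le> \<eta>"
  shows "fkl_lin_bandit {0, 1} two_arm_features two_arm_params (vector [1, 0]) (two_arm_ref C \<eta>) \<eta>"
  using two_arm_opt_mass_bounds[OF assms] assms
  by (auto simp: fkl_lin_bandit_def two_arm_params_def two_arm_reward two_arm_ref_def field_simps)

lemma two_arm_opt_stationary:
  assumes "1 < C" and "1 \<le> \<eta>"
  shows "\<forall>a\<in>{0, 1}. vector [1, 0] \<bullet> two_arm_features a
      + two_arm_ref C \<eta> a / (\<eta> * two_arm_opt C \<eta> a) = 1 + 1 / (\<eta> * C)"
proof -
  let ?q = "two_arm_opt_mass C \<eta>" and ?s = "1 - 1 / C"
  have "?q \<noteq> 0" and "?s \<noteq> 0" and "C \<noteq> 0" and "\<eta> \<noteq> 0"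
    using two_arm_opt_mass_bounds[OF assms] assms by auto
  have "\<eta> * (1 - ?q) = ?s" and "1 - ?q / C = ?s * (1 + 1 / (\<eta> * C))"
    using \<open>C \<noteq> 0\<close> \<open>\<eta> \<noteq> 0\<close> by (simp_all add: two_arm_opt_mass_def field_simps)
  then have "(1 - ?q / C) / (\<eta> * (1 - ?q)) = 1 + 1 / (\<eta> * C)"
    using \<open>?s \<noteq> 0\<close> by simp
  moreover have "1 + ?q / C / (\<eta> * ?q) = 1 + 1 / (\<eta> * C)"
    using \<open>?q \<noteq> 0\<close> by simp
  ultimately show ?thesis
    by (simp add: two_arm_reward two_arm_ref_def two_arm_opt_def)
qed

lemma two_arm_opt_full_support:
  assumes "1 < C" and "1 \<le> \<eta>"
  shows "two_arm_opt C \<eta> \<in> pol_simplex {0, 1}" and "\<forall>a\<in>{0, 1}. 0 < two_arm_opt C \<eta> a"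
  using two_arm_opt_mass_bounds[OF assms] by (auto simp: pol_simplex_def two_arm_opt_def)

lemma opt_policy_two_arm:
  assumes "1 < C" and "1 \<le> \<eta>"
  shows "opt_policy {0, 1} (\<lambda>a. vector [1, 0] \<bullet> two_arm_features a) (two_arm_ref C \<eta>) \<eta>
    = two_arm_opt C \<eta>"
proof (rule opt_policy_eq_stationary[OF _ _ _ _ _ two_arm_opt_stationary[OF assms]])
  show "\<forall>a\<in>{0, 1}. 0 < two_arm_ref C \<eta> a"
    using fkl_lin_bandit_two_arm[OF assms] by (simp add: fkl_lin_bandit_def)
qed (use assms two_arm_opt_full_support[OF assms] in auto)

lemma coverage_two_arm:
  assumes "1 < C" and "1 \<le> \<eta>"
  shows "C \<le> coverage {0, 1} (two_arm_ref C \<eta>) (two_arm_opt C \<eta>)"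
proof -
  have "two_arm_opt C \<eta> 0 / two_arm_ref C \<eta> 0 = C"
    using two_arm_opt_mass_bounds[OF assms] by (simp add: two_arm_opt_def two_arm_ref_def)
  then show ?thesis
    using coverage_ge[of "{0, 1}" 0 "two_arm_opt C \<eta>" "two_arm_ref C \<eta>"] by simp
qed

lemma Dsq_pol_two_arm:
  assumes "sum piref {0, 1} = 1" and "\<pi> \<in> pol_simplex {0, 1}"
  shows "Dsq_pol {0, 1} two_arm_features two_arm_params piref \<pi> = 1"
proof (rule Dsq_pol_eq_one_if_constant_differences[OF assms(1) _ _ _ _ _ assms(2)])
  fix g h assume "g \<in> two_arm_params" "h \<in> two_arm_params"
  then show "\<exists>c. \<forall>a\<in>{0, 1}. g \<bullet> two_arm_features a - h \<bullet> two_arm_features a = c"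
    by (auto simp: two_arm_params_def two_arm_features_def inner_vector_2)
next
  show "vector [1, 1] \<bullet> two_arm_features 0 \<noteq> vector [1, 0] \<bullet> two_arm_features (0::nat)"
    by (simp add: two_arm_features_def inner_vector_2)
qed (auto simp: two_arm_params_def)

theorem propositionB2:
  shows "\<exists>c1 c2 :: real. 0 < c1 \<and> 0 < c2 \<and>
    (\<forall>C \<eta> :: real. 2 \<le> C \<longrightarrow> 2 \<le> \<eta> \<longrightarrow>
      (\<exists>(A :: nat set) (\<phi> :: nat \<Rightarrow> real^2) (\<Theta> :: (real^2) set) (\<theta> :: real^2) (piref :: nat \<Rightarrow> real).
         fkl_lin_bandit A \<phi> \<Theta> \<theta> piref \<eta> \<and>
         (let \<pi> = opt_policy A (\<lambda>a. \<theta> \<bullet> \<phi> a) piref \<eta> in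
            C / 2 \<le> coverage A piref \<pi> \<and>
            ereal c1 \<le> Dsq_pol A \<phi> \<Theta> piref \<pi> \<and> Dsq_pol A \<phi> \<Theta> piref \<pi> \<le> ereal c2)))"
proof (intro exI[of _ "1::real"] conjI allI impI)
  fix C \<eta> :: real
  assume "2 \<le> C" and "2 \<le> \<eta>"
  then have "1 < C" and "1 \<le> \<eta>" by simp_all
  note bandit = fkl_lin_bandit_two_arm[OF this]
  have "Dsq_pol {0, 1} two_arm_features two_arm_params (two_arm_ref C \<eta>) (two_arm_opt C \<eta>) = 1"
    using bandit two_arm_opt_full_support(1)[OF \<open>1 < C\<close> \<open>1 \<le> \<eta>\<close>]
    by (intro Dsq_pol_two_arm) (simp_all add: fkl_lin_bandit_def)
  moreover have "C / 2 \<le> coverage {0, 1} (two_arm_ref C \<eta>) (two_arm_opt C \<eta>)"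
    using coverage_two_arm[OF \<open>1 < C\<close> \<open>1 \<le> \<eta>\<close>] \<open>2 \<le> C\<close> by simp
  ultimately show "\<exists>A \<phi> \<Theta> \<theta> piref. fkl_lin_bandit A \<phi> \<Theta> \<theta> piref \<eta> \<and>
         (let \<pi> = opt_policy A (\<lambda>a. \<theta> \<bullet> \<phi> a) piref \<eta> in
            C / 2 \<le> coverage A piref \<pi> \<and>
            ereal 1 \<le> Dsq_pol A \<phi> \<Theta> piref \<pi> \<and> Dsq_pol A \<phi> \<Theta> piref \<pi> \<le> ereal 1)"
    using bandit opt_policy_two_arm[OF \<open>1 < C\<close> \<open>1 \<le> \<eta>\<close>]
    by (intro exI[of _ "{0, 1}"] exI[of _ two_arm_features] exI[of _ two_arm_params]
        exI[of _ "vector [1, 0]"] exI[of _ "two_arm_ref C \<eta>"]) (simp add: Let_def)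
qed simp_all

end
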